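(* Let $p_1,p_2\in(0,1)$ and let $(I_1,I_2)$ be a bivariate Bernoulli vector with pmf $f_{00}=(1-p_1)(1-p_2)+p_1p_2\theta$, $f_{01}=(1-p_1)p_2-p_1p_2\theta$, $f_{10}=p_1(1-p_2)-p_1p_2\theta$, $f_{11}=p_1p_2+p_1p_2\theta$ (where $f_{ij}=\Pr(I_1=i,I_2=j)$), with $$-\min\left(1,\frac{(1-p_1)(1-p_2)}{p_1p_2}\right)\le\theta\le\min\left(\frac{1-p_1}{p_1},\frac{1-p_2}{p_2}\right).$$ Let $U_m=U_{0,m}^{1-p_m}U_{1,m}^{I_m}$, $m=1,2$, with $U_{0,1},U_{0,2},U_{1,1},U_{1,2}$ independent standard uniform and independent of $(I_1,I_2)$. Then the copula of $(U_1,U_2)$ is $$C(u,v)=uv\left(1+\theta\left(1-u^{\frac{p_1}{1-p_1}}\right)\left(1-v^{\frac{p_2}{1-p_2}}\right)\right),\qquad (u,v)\in[0,1]^2.$$ *)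

theory Defs
  imports "HOL-Probability.Probability"
begin

definition copula :: "(real \<Rightarrow> real \<Rightarrow> real) \<Rightarrow> bool" where
  "copula C \<longleftrightarrow>
     (\<forall>u\<in>{0..1}. C u 0 = 0 \<and> C 0 u = 0 \<and> C u 1 = u \<and> C 1 u = u) \<and>
     (\<forall>u1 u2 v1 v2. 0 \<le> u1 \<and> u1 \<le> u2 \<and> u2 \<le> 1 \<and> 0 \<le> v1 \<and> v1 \<le> v2 \<and> v2 \<le> 1 \<longrightarrow>
        C u2 v2 - C u2 v1 - C u1 v2 + C u1 v1 \<ge> 0)"

definition copula_of :: "'a measure \<Rightarrow> ('a \<Rightarrow> real) \<Rightarrow> ('a \<Rightarrow> real) \<Rightarrow> (real \<Rightarrow> real \<Rightarrow> real) \<Rightarrow> bool" where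
  "copula_of M X Y C \<longleftrightarrow> copula C \<and>
     (\<forall>x y. measure M {\<omega>\<in>space M. X \<omega> \<le> x \<and> Y \<omega> \<le> y} =
            C (measure M {\<omega>\<in>space M. X \<omega> \<le> x}) (measure M {\<omega>\<in>space M. Y \<omega> \<le> y}))"

text \<open>Independence of two random variables with possibly different codomain types
(the library's indep_var requires a common codomain type; this is its
characterisation indep_var_eq, stated for heterogeneous types).\<close>
definition indep_rv :: "'a measure \<Rightarrow> 'b measure \<Rightarrow> ('a \<Rightarrow> 'b) \<Rightarrow> 'c measure \<Rightarrow> ('a \<Rightarrow> 'c) \<Rightarrow> bool" where
  "indep_rv M S X T Y \<longleftrightarrow> X \<in> measurable M S \<and> Y \<in> measurable M T \<and>
     prob_space.indep_set M
       (sigma_sets (space M) {X -` A \<inter> space M | A. A \<in> sets S})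
       (sigma_sets (space M) {Y -` B \<inter> space M | B. B \<in> sets T})"

end

theory Submission
  imports Defs
begin

text \<open>Conditionally on (I1, I2) = (i, j) the two coordinates are independent, and U0^(1-p) * U1^i
has distribution function F_i(x) = x^(1/(1-p)) + i * (x - x^(1/(1-p))) / p on [0,1] (for i = 1,
integrate P(s^(1-p) * V \<le> x) over s). Mixing over the Bernoulli pmf, the margins are
(1-p) F_0 + p F_1 = x, i.e. standard uniform, so on the unit square the joint distribution function
is the copula itself. Writing F_i(x) = x * (t + i * (1 - t) / p) with t = x^(p/(1-p)), the
four-term mixture collapses to the stated formula.\<close>

lemma powr_le_iff_le_powr_inverse:
  fixes a x s :: real
  assumes "0 < a" "0 \<le> x" "0 \<le> s"
  shows "s powr a \<le> x \<longleftrightarrow> s \<le> x powr (1/a)"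
proof
  assume "s powr a \<le> x"
  then have "(s powr a) powr (1/a) \<le> x powr (1/a)"
    using assms by (intro powr_mono2) auto
  then show "s \<le> x powr (1/a)"
    using assms by (simp add: powr_powr)
next
  assume "s \<le> x powr (1/a)"
  then have "s powr a \<le> (x powr (1/a)) powr a"
    using assms by (intro powr_mono2) auto
  then show "s powr a \<le> x"
    using assms by (simp add: powr_powr)
qed

text \<open>The integrand is s \<mapsto> P(s^a * V \<le> x) for V standard uniform.\<close>

lemma has_integral_truncated_powr_ratio:
  fixes a x :: real
  assumes a: "0 < a" "a < 1" and x: "0 \<le> x" "x \<le> 1"
  shows "((\<lambda>s. if s powr a \<le> x then 1 else x / s powr a) has_integral
           x powr (1/a) + (x - x powr (1/a)) / (1 - a)) {0..1}"
proof -
  define b where "b = x powr (1/a)"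
  define \<phi> where "\<phi> = (\<lambda>s::real. if s powr a \<le> x then 1 else x / s powr a)"
  define H where "H = (\<lambda>s::real. x * s powr (1 - a) / (1 - a))"
  have b: "0 \<le> b" "b \<le> 1"
    using a x by (auto simp: b_def powr_le1)
  have below_b: "s powr a \<le> x \<longleftrightarrow> s \<le> b" if "0 \<le> s" for s
    unfolding b_def using a x that by (intro powr_le_iff_le_powr_inverse) auto
  have "((\<lambda>s. 1::real) has_integral b) {0..b}"
    using has_integral_const_real[of "1::real" 0 b] b by simp
  then have left: "(\<phi> has_integral b) {0..b}"
    by (rule has_integral_eq[rotated]) (auto simp: \<phi>_def below_b)
  have right: "(\<phi> has_integral H 1 - H b) {b..1}"
  proof (rule fundamental_theorem_of_calculus_strong[of "{b}"])
    have "continuous_on {b..1} (\<lambda>s::real. s powr (1 - a))"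
      using a b by (intro continuous_on_powr' continuous_intros) auto
    then show "continuous_on {b..1} H"
      unfolding H_def using a by (intro continuous_on_divide continuous_on_mult continuous_on_const) auto
    fix s assume "s \<in> {b..1} - {b}"
    then have s: "0 < s" "b < s" using b by auto
    have "(H has_real_derivative x * ((1 - a) * s powr (1 - a - 1)) / (1 - a)) (at s)"
      unfolding H_def using s by (intro DERIV_cdivide DERIV_cmult has_real_derivative_powr) auto
    moreover have "x * ((1 - a) * s powr (1 - a - 1)) / (1 - a) = \<phi> s"
      using s below_b[of s] a by (auto simp: \<phi>_def powr_minus_divide powr_diff)
    ultimately show "(H has_vector_derivative \<phi> s) (at s)"
      by (simp add: has_real_derivative_iff_has_vector_derivative)
  qed (use b in auto)
  have "x * b powr (1 - a) = b"
    using a x powr_mult_base[of x "(1 - a) / a"]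
    by (simp add: b_def powr_powr field_simps)
  then have "H 1 - H b = (x - b) / (1 - a)"
    by (simp add: H_def diff_divide_distrib)
  with has_integral_combine[OF b left right] show ?thesis
    by (simp add: \<phi>_def b_def)
qed

lemma sets_powr_mult_pow_le [measurable]:
  "{z::real \<times> real. fst z powr a * snd z ^ i \<le> x} \<in> sets (borel \<Otimes>\<^sub>M borel)"
proof -
  have "{z::real \<times> real \<in> space (borel \<Otimes>\<^sub>M borel). fst z powr a * snd z ^ i \<le> x} \<in> sets (borel \<Otimes>\<^sub>M borel)"
    by measurable
  then show ?thesis
    by (simp add: space_pair_measure)
qed

lemma distr_borel_uniform:
  assumes "distributed M lborel U (indicator {0..1})"
  shows "distr M borel U = density lborel (indicator {0..1})"
  using assms by (simp add: distributed_def cong: distr_cong)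

lemma emeasure_uniform_scaled_le:
  fixes c x :: real
  assumes c: "0 \<le> c" "c \<le> 1" and x: "0 \<le> x"
  shows "emeasure (density lborel (indicator {0..1})) {t. c * t \<le> x} =
           ennreal (if c \<le> x then 1 else x / c)"
proof -
  have "{t::real \<in> space borel. c * t \<le> x} \<in> sets borel" by measurable
  then have "emeasure (density lborel (indicator {0..1})) {t. c * t \<le> x} =
             emeasure lborel ({0..1} \<inter> {t. c * t \<le> x})"
    by (intro emeasure_restricted) auto
  also have "{0..1} \<inter> {t. c * t \<le> x} = (if c \<le> x then {0..1} else {0..x / c})"
  proof (cases "c \<le> x")
    case True
    have "c * t \<le> x" if "0 \<le> t" "t \<le> 1" for t
      using mult_left_le[OF that(2) c(1)] True by linarith
    with True show ?thesis by auto
  next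
    case False
    then have "0 < c" using x by simp
    have "t \<le> 1" if "c * t \<le> x" for t
      using that False \<open>0 < c\<close> by (smt (verit) mult_le_cancel_left1)
    with False \<open>0 < c\<close> show ?thesis by (auto simp: field_simps)
  qed
  finally show ?thesis
    using x c by (auto simp: divide_nonneg_nonneg)
qed

lemma emeasure_uniform_square_powr_mult_le:
  fixes a x :: real
  assumes a: "0 < a" "a < 1" and x: "0 \<le> x" "x \<le> 1"
  defines "D \<equiv> density lborel (indicator {0..1::real})"
  shows "emeasure (D \<Otimes>\<^sub>M D) {z. fst z powr a * snd z \<le> x} =
           ennreal (x powr (1/a) + (x - x powr (1/a)) / (1 - a))"
proof -
  define S where "S = {z::real \<times> real. fst z powr a * snd z \<le> x}"
  define \<phi> where "\<phi> = (\<lambda>s::real. if s powr a \<le> x then 1 else x / s powr a)"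
  have S: "S \<in> sets (D \<Otimes>\<^sub>M D)"
    using sets_powr_mult_pow_le[of a 1 x] by (simp add: S_def D_def cong: sets_pair_measure_cong)
  interpret D: prob_space D
    by (rule prob_spaceI) (simp add: D_def emeasure_restricted)
  have "emeasure (D \<Otimes>\<^sub>M D) S = (\<integral>\<^sup>+s. emeasure D (Pair s -` S) \<partial>D)"
    using S by (rule D.emeasure_pair_measure_alt)
  also have "\<dots> = (\<integral>\<^sup>+s. indicator {0..1} s * emeasure D (Pair s -` S) \<partial>lborel)"
  proof -
    have "(\<lambda>s. emeasure D (Pair s -` S)) \<in> borel_measurable borel"
      using D.measurable_emeasure_Pair[OF S] by (simp add: D_def cong: measurable_cong_sets)
    then show ?thesis
      unfolding D_def by (intro nn_integral_density) (auto simp: D_def[symmetric])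
  qed
  also have "\<dots> = (\<integral>\<^sup>+s. ennreal (indicator {0..1} s * \<phi> s) \<partial>lborel)"
  proof (rule nn_integral_cong)
    fix s :: real
    have "emeasure D (Pair s -` S) = ennreal (\<phi> s)" if "s \<in> {0..1}"
      using that a x emeasure_uniform_scaled_le[of "s powr a" x]
      by (auto simp: D_def S_def \<phi>_def powr_le1)
    then show "indicator {0..1} s * emeasure D (Pair s -` S) = ennreal (indicator {0..1} s * \<phi> s)"
      by (cases "s \<in> {0..1}") auto
  qed
  also have "\<dots> = ennreal (x powr (1/a) + (x - x powr (1/a)) / (1 - a))"
  proof (rule nn_integral_has_integral_lborel)
    show "(\<lambda>s. indicator {0..1} s * \<phi> s) \<in> borel_measurable borel"
      unfolding \<phi>_def by measurable
    show "0 \<le> indicator {0..1} s * \<phi> s" for s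
      using x by (auto simp: \<phi>_def indicator_def)
    show "((\<lambda>s. indicator {0..1} s * \<phi> s) has_integral
            x powr (1/a) + (x - x powr (1/a)) / (1 - a)) UNIV"
      using has_integral_restrict_UNIV[THEN iffD2, OF has_integral_truncated_powr_ratio[OF a x]]
      by (rule has_integral_eq[rotated]) (simp add: indicator_def \<phi>_def)
  qed
  finally show ?thesis
    by (simp add: S_def)
qed

context prob_space
begin

lemma prob_uniform_powr_le:
  fixes a x :: real
  assumes U: "distributed M lborel U (indicator {0..1})"
    and a: "0 < a" and x: "0 \<le> x" "x \<le> 1"
  shows "prob {\<omega>\<in>space M. U \<omega> powr a \<le> x} = x powr (1/a)"
proof -
  define A where "A = {s::real. s powr a \<le> x}"
  have "{s::real \<in> space borel. s powr a \<le> x} \<in> sets borel" by measurable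
  then have A: "A \<in> sets borel" by (simp add: A_def)
  have "{0..1} \<inter> A = {0..x powr (1/a)}"
    using powr_le_iff_le_powr_inverse[OF a x(1)] a x powr_le1[of "1/a" x]
    by (auto simp: A_def)
  moreover have "emeasure M {\<omega>\<in>space M. U \<omega> powr a \<le> x} = emeasure (distr M borel U) A"
    using distributed_measurable[OF U] A
    by (subst emeasure_distr) (auto simp: A_def vimage_def Int_def conj_commute)
  ultimately have "emeasure M {\<omega>\<in>space M. U \<omega> powr a \<le> x} = ennreal (x powr (1/a))"
    using A by (simp add: distr_borel_uniform[OF U] emeasure_restricted)
  then show ?thesis
    by (simp add: emeasure_eq_measure)
qed

lemma prob_uniform_powr_mult_le:
  fixes a x :: real
  assumes U: "distributed M lborel U (indicator {0..1})"
    and V: "distributed M lborel V (indicator {0..1})"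
    and UV: "indep_var borel U borel V"
    and a: "0 < a" "a < 1" and x: "0 \<le> x" "x \<le> 1"
  shows "prob {\<omega>\<in>space M. U \<omega> powr a * V \<omega> \<le> x} =
           x powr (1/a) + (x - x powr (1/a)) / (1 - a)"
proof -
  define S where "S = {z::real \<times> real. fst z powr a * snd z \<le> x}"
  have S: "S \<in> sets (borel \<Otimes>\<^sub>M borel)"
    using sets_powr_mult_pow_le[of a 1 x] by (simp add: S_def)
  have [measurable]: "U \<in> borel_measurable M" "V \<in> borel_measurable M"
    using distributed_measurable[OF U] distributed_measurable[OF V] by auto
  have "distr M (borel \<Otimes>\<^sub>M borel) (\<lambda>\<omega>. (U \<omega>, V \<omega>)) =
        density lborel (indicator {0..1}) \<Otimes>\<^sub>M density lborel (indicator {0..1})"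
    using UV unfolding indep_var_distribution_eq
    by (simp add: distr_borel_uniform[OF U] distr_borel_uniform[OF V])
  then have "emeasure M {\<omega>\<in>space M. U \<omega> powr a * V \<omega> \<le> x} =
        ennreal (x powr (1/a) + (x - x powr (1/a)) / (1 - a))"
    using emeasure_distr[OF _ S, of "\<lambda>\<omega>. (U \<omega>, V \<omega>)" M] emeasure_uniform_square_powr_mult_le[OF a x]
    by (simp add: S_def vimage_def Int_def conj_commute)
  moreover have "0 \<le> x powr (1/a) + (x - x powr (1/a)) / (1 - a)"
    using x a powr_mono'[of 1 "1/a" x] by simp
  ultimately show ?thesis
    by (simp add: emeasure_eq_measure)
qed

lemma indep_var_of_indep_vars:
  assumes "indep_vars M' X I" "i \<in> I" "j \<in> I" "i \<noteq> j"
  shows "indep_var (M' i) (X i) (M' j) (X j)"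
proof -
  have "indep_var (M' i) ((\<lambda>f. f i) \<circ> (\<lambda>\<omega>. restrict (\<lambda>n. X n \<omega>) {i}))
                  (M' j) ((\<lambda>f. f j) \<circ> (\<lambda>\<omega>. restrict (\<lambda>n. X n \<omega>) {j}))"
    using assms by (intro indep_var_compose[OF indep_var_restrict]) auto
  then show ?thesis
    by (simp add: o_def)
qed

lemma indep_var_pairs_of_indep_vars:
  assumes "indep_vars M' X I" "{i, k, j, l} \<subseteq> I" "{i, k} \<inter> {j, l} = {}"
  shows "indep_var (M' i \<Otimes>\<^sub>M M' k) (\<lambda>\<omega>. (X i \<omega>, X k \<omega>))
                   (M' j \<Otimes>\<^sub>M M' l) (\<lambda>\<omega>. (X j \<omega>, X l \<omega>))"
proof -
  have "indep_var (M' i \<Otimes>\<^sub>M M' k) ((\<lambda>f. (f i, f k)) \<circ> (\<lambda>\<omega>. restrict (\<lambda>n. X n \<omega>) {i, k}))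
                  (M' j \<Otimes>\<^sub>M M' l) ((\<lambda>f. (f j, f l)) \<circ> (\<lambda>\<omega>. restrict (\<lambda>n. X n \<omega>) {j, l}))"
    using assms by (intro indep_var_compose[OF indep_var_restrict]) auto
  then show ?thesis
    by (simp add: o_def)
qed

lemma indep_rv_compose:
  assumes "indep_rv M S X T Y" "g \<in> measurable T T'"
  shows "indep_rv M S X T' (g \<circ> Y)"
proof -
  let ?\<sigma> = "\<lambda>Z N. sigma_sets (space M) {Z -` A \<inter> space M | A. A \<in> sets N}"
  have Y: "Y \<in> measurable M T" and XY: "indep_set (?\<sigma> X S) (?\<sigma> Y T)"
    using assms(1) by (auto simp: indep_rv_def)
  have "(g \<circ> Y) -` B \<inter> space M = Y -` (g -` B \<inter> space T) \<inter> space M" for B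
    using measurable_space[OF Y] by auto
  then have "?\<sigma> (g \<circ> Y) T' \<subseteq> ?\<sigma> Y T"
  proof (intro sigma_sets_mono' subsetI)
    fix C assume "C \<in> {(g \<circ> Y) -` B \<inter> space M | B. B \<in> sets T'}"
    then obtain B where "B \<in> sets T'" "C = Y -` (g -` B \<inter> space T) \<inter> space M"
      using \<open>\<And>B. (g \<circ> Y) -` B \<inter> space M = _\<close> by auto
    moreover have "g -` B \<inter> space T \<in> sets T"
      using measurable_sets[OF assms(2) \<open>B \<in> sets T'\<close>] .
    ultimately show "C \<in> {Y -` A \<inter> space M | A. A \<in> sets T}"
      by blast
  qed
  then have "indep_set (?\<sigma> X S) (?\<sigma> (g \<circ> Y) T')"
    using XY indep_setD_ev1[OF XY] indep_setD_ev2[OF XY]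
    by (intro indep_setI) (auto intro: indep_setD)
  with assms show ?thesis
    by (auto simp: indep_rv_def)
qed

lemma prob_value_inter_indep_rv:
  assumes "indep_rv M (count_space UNIV) J N Z" "W \<in> sets N"
  shows "prob {\<omega>\<in>space M. J \<omega> = k \<and> Z \<omega> \<in> W} =
           prob {\<omega>\<in>space M. J \<omega> = k} * prob {\<omega>\<in>space M. Z \<omega> \<in> W}"
proof -
  have "prob (J -` {k} \<inter> space M \<inter> (Z -` W \<inter> space M)) =
        prob (J -` {k} \<inter> space M) * prob (Z -` W \<inter> space M)"
    using assms unfolding indep_rv_def by (intro indep_setD) auto
  moreover have "J -` {k} \<inter> space M \<inter> (Z -` W \<inter> space M) = {\<omega>\<in>space M. J \<omega> = k \<and> Z \<omega> \<in> W}"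
    by auto
  ultimately show ?thesis
    by (simp add: vimage_def Int_def conj_commute)
qed

lemma prob_eq_sum_prob_value:
  assumes J: "J \<in> measurable M (count_space UNIV)" and K: "finite K"
    and total: "(\<Sum>k\<in>K. prob {\<omega>\<in>space M. J \<omega> = k}) = 1"
    and P: "{\<omega>\<in>space M. P \<omega>} \<in> events"
  shows "prob {\<omega>\<in>space M. P \<omega>} = (\<Sum>k\<in>K. prob {\<omega>\<in>space M. P \<omega> \<and> J \<omega> = k})"
proof -
  have ev: "{\<omega>\<in>space M. J \<omega> \<in> A} \<in> events" for A
    using measurable_sets[OF J, of A] by (simp add: vimage_def Int_def conj_commute)
  have ev_value: "{\<omega>\<in>space M. J \<omega> = k} \<in> events" for k
    using ev[of "{k}"] by simp
  have "prob {\<omega>\<in>space M. J \<omega> \<in> K} = (\<Sum>k\<in>K. prob {\<omega>\<in>space M. J \<omega> = k})"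
    by (rule prob_sum[OF K ev_value ev]) auto
  with total have "AE \<omega> in M. J \<omega> \<in> K"
    using ev[of K] by (simp add: prob_Collect_eq_1)
  moreover have "{\<omega>\<in>space M. P \<omega> \<and> J \<omega> = k} \<in> events" for k
  proof -
    have "{\<omega>\<in>space M. P \<omega>} \<inter> {\<omega>\<in>space M. J \<omega> = k} = {\<omega>\<in>space M. P \<omega> \<and> J \<omega> = k}"
      by blast
    then show ?thesis
      using sets.Int[OF P ev_value[of k]] by simp
  qed
  ultimately show ?thesis
    by (intro prob_sum[OF K _ P]) auto
qed

lemma prob_mixture_indep_rv:
  fixes J :: "'a \<Rightarrow> 'k::countable"
  assumes J: "indep_rv M (count_space UNIV) J (N1 \<Otimes>\<^sub>M N2) (\<lambda>\<omega>. (Z1 \<omega>, Z2 \<omega>))"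
    and Z: "indep_var N1 Z1 N2 Z2"
    and K: "finite K" "(\<Sum>k\<in>K. prob {\<omega>\<in>space M. J \<omega> = k}) = 1"
    and A: "\<And>k. A k \<in> sets N1" and B: "\<And>k. B k \<in> sets N2"
  shows "prob {\<omega>\<in>space M. Z1 \<omega> \<in> A (J \<omega>) \<and> Z2 \<omega> \<in> B (J \<omega>)} =
    (\<Sum>k\<in>K. prob {\<omega>\<in>space M. J \<omega> = k} * prob {\<omega>\<in>space M. Z1 \<omega> \<in> A k}
              * prob {\<omega>\<in>space M. Z2 \<omega> \<in> B k})"
proof -
  have [measurable]: "J \<in> measurable M (count_space UNIV)"
    "Z1 \<in> measurable M N1" "Z2 \<in> measurable M N2"
    using J indep_var_rv1[OF Z] indep_var_rv2[OF Z] by (auto simp: indep_rv_def)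
  have [measurable]: "A k \<in> sets N1" "B k \<in> sets N2" for k
    using A B .
  have "{\<omega>\<in>space M. Z1 \<omega> \<in> A (J \<omega>) \<and> Z2 \<omega> \<in> B (J \<omega>)} \<in> events"
    by measurable
  then have "prob {\<omega>\<in>space M. Z1 \<omega> \<in> A (J \<omega>) \<and> Z2 \<omega> \<in> B (J \<omega>)} =
      (\<Sum>k\<in>K. prob {\<omega>\<in>space M. J \<omega> = k \<and> (Z1 \<omega>, Z2 \<omega>) \<in> A k \<times> B k})"
    using K by (subst prob_eq_sum_prob_value[where J=J and K=K]) (auto intro!: sum.cong arg_cong[where f=prob])
  also have "\<dots> = (\<Sum>k\<in>K. prob {\<omega>\<in>space M. J \<omega> = k} * prob {\<omega>\<in>space M. (Z1 \<omega>, Z2 \<omega>) \<in> A k \<times> B k})"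
    using J A B by (intro sum.cong prob_value_inter_indep_rv) auto
  also have "\<dots> = (\<Sum>k\<in>K. prob {\<omega>\<in>space M. J \<omega> = k} * prob {\<omega>\<in>space M. Z1 \<omega> \<in> A k}
              * prob {\<omega>\<in>space M. Z2 \<omega> \<in> B k})"
    using indep_varD[OF Z A B]
    by (intro sum.cong) (auto simp: vimage_def Int_def conj_commute)
  finally show ?thesis .
qed

lemma AE_unit_interval_of_uniform_cdf:
  fixes X :: "'a \<Rightarrow> real"
  assumes [measurable]: "X \<in> borel_measurable M"
    and cdf: "\<And>x. 0 \<le> x \<Longrightarrow> x \<le> 1 \<Longrightarrow> prob {\<omega>\<in>space M. X \<omega> \<le> x} = x"
  shows "AE \<omega> in M. 0 < X \<omega> \<and> X \<omega> \<le> 1"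
proof -
  have "AE \<omega> in M. \<omega> \<notin> {\<omega>\<in>space M. X \<omega> \<le> 0}"
    using cdf[of 0] by (subst prob_eq_0[symmetric]) auto
  moreover have "AE \<omega> in M. X \<omega> \<le> 1"
    using cdf[of 1] by (subst prob_Collect_eq_1[symmetric]) auto
  moreover have "AE \<omega> in M. \<omega> \<in> space M"
    by (rule AE_space)
  ultimately show ?thesis
    by eventually_elim auto
qed

lemma copula_of_uniform_margins:
  fixes X Y :: "'a \<Rightarrow> real"
  assumes [measurable]: "X \<in> borel_measurable M" "Y \<in> borel_measurable M"
    and cdf_X: "\<And>x. 0 \<le> x \<Longrightarrow> x \<le> 1 \<Longrightarrow> prob {\<omega>\<in>space M. X \<omega> \<le> x} = x"
    and cdf_Y: "\<And>y. 0 \<le> y \<Longrightarrow> y \<le> 1 \<Longrightarrow> prob {\<omega>\<in>space M. Y \<omega> \<le> y} = y"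
    and joint: "\<And>x y. 0 \<le> x \<Longrightarrow> x \<le> 1 \<Longrightarrow> 0 \<le> y \<Longrightarrow> y \<le> 1 \<Longrightarrow>
                  prob {\<omega>\<in>space M. X \<omega> \<le> x \<and> Y \<omega> \<le> y} = C x y"
  shows "copula_of M X Y C"
proof -
  define clamp where "clamp t = max 0 (min 1 t)" for t :: real
  have clamp: "0 \<le> clamp t" "clamp t \<le> 1" for t
    by (auto simp: clamp_def)
  have le_clamp_iff: "0 < s \<Longrightarrow> s \<le> 1 \<Longrightarrow> s \<le> clamp t \<longleftrightarrow> s \<le> t" for s t
    by (auto simp: clamp_def)
  have ae: "AE \<omega> in M. 0 < X \<omega> \<and> X \<omega> \<le> 1 \<and> 0 < Y \<omega> \<and> Y \<omega> \<le> 1"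
    using AE_unit_interval_of_uniform_cdf[of X] AE_unit_interval_of_uniform_cdf[of Y] cdf_X cdf_Y
    by auto
  have margin_X: "prob {\<omega>\<in>space M. X \<omega> \<le> x} = clamp x" for x
  proof -
    have "prob {\<omega>\<in>space M. X \<omega> \<le> x} = prob {\<omega>\<in>space M. X \<omega> \<le> clamp x}"
      by (rule prob_eq_AE) (use ae in \<open>eventually_elim, auto simp: le_clamp_iff\<close>)
    then show ?thesis
      using cdf_X[OF clamp] by simp
  qed
  have margin_Y: "prob {\<omega>\<in>space M. Y \<omega> \<le> y} = clamp y" for y
  proof -
    have "prob {\<omega>\<in>space M. Y \<omega> \<le> y} = prob {\<omega>\<in>space M. Y \<omega> \<le> clamp y}"
      by (rule prob_eq_AE) (use ae in \<open>eventually_elim, auto simp: le_clamp_iff\<close>)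
    then show ?thesis
      using cdf_Y[OF clamp] by simp
  qed
  have cdf: "prob {\<omega>\<in>space M. X \<omega> \<le> x \<and> Y \<omega> \<le> y} = C (clamp x) (clamp y)" for x y
  proof -
    have "prob {\<omega>\<in>space M. X \<omega> \<le> x \<and> Y \<omega> \<le> y} =
          prob {\<omega>\<in>space M. X \<omega> \<le> clamp x \<and> Y \<omega> \<le> clamp y}"
      by (rule prob_eq_AE) (use ae in \<open>eventually_elim, auto simp: le_clamp_iff\<close>)
    then show ?thesis
      using joint[OF clamp clamp] by simp
  qed
  have C_prob: "C x y = prob {\<omega>\<in>space M. X \<omega> \<le> x \<and> Y \<omega> \<le> y}"
    if "0 \<le> x" "x \<le> 1" "0 \<le> y" "y \<le> 1" for x y
    using joint that by simp
  have "copula C"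
    unfolding copula_def
  proof (intro conjI ballI allI impI)
    fix u :: real assume u: "u \<in> {0..1}"
    have "prob {\<omega>\<in>space M. X \<omega> \<le> u \<and> Y \<omega> \<le> 0} = 0"
      "prob {\<omega>\<in>space M. X \<omega> \<le> 0 \<and> Y \<omega> \<le> u} = 0"
      by (rule prob_eq_0_AE, use ae in \<open>eventually_elim, auto\<close>)+
    then show "C u 0 = 0" "C 0 u = 0"
      using u by (simp_all add: C_prob)
    have "prob {\<omega>\<in>space M. X \<omega> \<le> u \<and> Y \<omega> \<le> 1} = prob {\<omega>\<in>space M. X \<omega> \<le> u}"
      "prob {\<omega>\<in>space M. X \<omega> \<le> 1 \<and> Y \<omega> \<le> u} = prob {\<omega>\<in>space M. Y \<omega> \<le> u}"
      by (rule prob_eq_AE, use ae in \<open>eventually_elim, auto\<close>, measurable)+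
    then show "C u 1 = u" "C 1 u = u"
      using u cdf_X cdf_Y by (simp_all add: C_prob)
  next
    fix u1 u2 v1 v2 :: real
    assume h: "0 \<le> u1 \<and> u1 \<le> u2 \<and> u2 \<le> 1 \<and> 0 \<le> v1 \<and> v1 \<le> v2 \<and> v2 \<le> 1"
    define R where "R u v = {\<omega>\<in>space M. X \<omega> \<le> u \<and> Y \<omega> \<le> v}" for u v
    have R: "R u v \<in> events" for u v
      unfolding R_def by measurable
    have "C u2 v2 - C u2 v1 = prob (R u2 v2 - R u2 v1)"
      and "C u1 v2 - C u1 v1 = prob (R u1 v2 - R u1 v1)"
      using h R by (simp_all add: C_prob R_def finite_measure_Diff subset_eq)
    moreover have "prob (R u1 v2 - R u1 v1) \<le> prob (R u2 v2 - R u2 v1)"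
      using h R by (intro finite_measure_mono) (auto simp: R_def)
    ultimately show "C u2 v2 - C u2 v1 - C u1 v2 + C u1 v1 \<ge> 0"
      by linarith
  qed
  then show ?thesis
    by (simp add: copula_of_def margin_X margin_Y cdf)
qed

end

text \<open>The distribution function on [0,1] of U^(1-p) * V^i for independent standard uniform U, V
  and i \<in> {0,1}.\<close>

definition conditional_cdf :: "real \<Rightarrow> nat \<Rightarrow> real \<Rightarrow> real" where
  "conditional_cdf p i x = x powr (1 / (1 - p)) + real i * (x - x powr (1 / (1 - p))) / p"

lemma conditional_cdf_eq:
  assumes "0 \<le> x" "p < 1"
  shows "conditional_cdf p i x = x * (x powr (p / (1 - p)) + real i * (1 - x powr (p / (1 - p))) / p)"
proof -
  have "x powr (1 / (1 - p)) = x * x powr (p / (1 - p))"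
    using assms powr_mult_base[of x "p / (1 - p)"] by (simp add: field_simps)
  then show ?thesis
    by (simp add: conditional_cdf_def algebra_simps add_divide_distrib)
qed

lemma conditional_cdf_average:
  assumes "0 \<le> x" "0 < p" "p < 1"
  shows "(1 - p) * conditional_cdf p 0 x + p * conditional_cdf p 1 x = x"
  using assms by (simp add: conditional_cdf_def field_simps)

lemma conditional_cdf_bivariate_mixture:
  fixes p1 p2 \<theta> x y :: real
  assumes "0 \<le> x" "0 \<le> y" "0 < p1" "p1 < 1" "0 < p2" "p2 < 1"
  shows "((1 - p1) * (1 - p2) + p1 * p2 * \<theta>) * conditional_cdf p1 0 x * conditional_cdf p2 0 y
       + ((1 - p1) * p2 - p1 * p2 * \<theta>) * conditional_cdf p1 0 x * conditional_cdf p2 1 y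
       + (p1 * (1 - p2) - p1 * p2 * \<theta>) * conditional_cdf p1 1 x * conditional_cdf p2 0 y
       + (p1 * p2 + p1 * p2 * \<theta>) * conditional_cdf p1 1 x * conditional_cdf p2 1 y
     = x * y * (1 + \<theta> * (1 - x powr (p1 / (1 - p1))) * (1 - y powr (p2 / (1 - p2))))"
  using assms by (simp add: conditional_cdf_eq field_simps)

lemma (in prob_space) prob_uniform_powr_mult_pow_le:
  assumes U: "distributed M lborel U (indicator {0..1})"
    and V: "distributed M lborel V (indicator {0..1})"
    and UV: "indep_var borel U borel V"
    and p: "0 < p" "p < 1" and i: "i \<le> 1" and x: "0 \<le> x" "x \<le> 1"
  shows "prob {\<omega>\<in>space M. U \<omega> powr (1 - p) * V \<omega> ^ i \<le> x} = conditional_cdf p i x"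
proof (cases "i = 0")
  case True
  then show ?thesis
    using prob_uniform_powr_le[OF U, of "1 - p"] p x by (simp add: conditional_cdf_def)
next
  case False
  with i have "i = 1" by simp
  then show ?thesis
    using prob_uniform_powr_mult_le[OF U V UV, of "1 - p"] p x by (simp add: conditional_cdf_def)
qed

locale bernoulli_uniform_mixture = prob_space M for M :: "'a measure" +
  fixes p1 p2 :: real and I1 I2 :: "'a \<Rightarrow> nat" and U01 U02 U11 U12 :: "'a \<Rightarrow> real"
  assumes p: "0 < p1" "p1 < 1" "0 < p2" "p2 < 1"
    and U01: "distributed M lborel U01 (indicator {0..1})"
    and U02: "distributed M lborel U02 (indicator {0..1})"
    and U11: "distributed M lborel U11 (indicator {0..1})"
    and U12: "distributed M lborel U12 (indicator {0..1})"
    and indep_uniforms: "indep_vars (\<lambda>_. borel) (\<lambda>i. [U01, U02, U11, U12] ! i) {..<4}"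
    and indep_bernoulli: "indep_rv M (count_space UNIV) (\<lambda>\<omega>. (I1 \<omega>, I2 \<omega>))
                            borel (\<lambda>\<omega>. (U01 \<omega>, U02 \<omega>, U11 \<omega>, U12 \<omega>))"
    and bernoulli: "(\<Sum>(i, j)\<in>{0, 1}\<times>{0, 1}. prob {\<omega>\<in>space M. I1 \<omega> = i \<and> I2 \<omega> = j}) = 1"
begin

lemma prob_mixture:
  assumes A: "\<And>k. A k \<in> sets (borel \<Otimes>\<^sub>M borel)" and B: "\<And>k. B k \<in> sets (borel \<Otimes>\<^sub>M borel)"
  shows "prob {\<omega>\<in>space M. (U01 \<omega>, U11 \<omega>) \<in> A (I1 \<omega>, I2 \<omega>) \<and> (U02 \<omega>, U12 \<omega>) \<in> B (I1 \<omega>, I2 \<omega>)} =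
    (\<Sum>(i, j)\<in>{0, 1}\<times>{0, 1}. prob {\<omega>\<in>space M. I1 \<omega> = i \<and> I2 \<omega> = j}
       * prob {\<omega>\<in>space M. (U01 \<omega>, U11 \<omega>) \<in> A (i, j)} * prob {\<omega>\<in>space M. (U02 \<omega>, U12 \<omega>) \<in> B (i, j)})"
proof -
  define g :: "real \<times> real \<times> real \<times> real \<Rightarrow> (real \<times> real) \<times> (real \<times> real)"
    where "g = (\<lambda>(a, b, c, d). ((a, c), (b, d)))"
  have "g \<in> measurable (borel \<Otimes>\<^sub>M borel \<Otimes>\<^sub>M borel \<Otimes>\<^sub>M borel) ((borel \<Otimes>\<^sub>M borel) \<Otimes>\<^sub>M (borel \<Otimes>\<^sub>M borel))"
    unfolding g_def by measurable
  moreover have "borel \<Otimes>\<^sub>M borel \<Otimes>\<^sub>M borel \<Otimes>\<^sub>M borel = (borel :: (real \<times> real \<times> real \<times> real) measure)"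
    by (simp add: borel_prod)
  ultimately have "g \<in> measurable borel ((borel \<Otimes>\<^sub>M borel) \<Otimes>\<^sub>M (borel \<Otimes>\<^sub>M borel))"
    by simp
  from indep_rv_compose[OF indep_bernoulli this]
  have J: "indep_rv M (count_space UNIV) (\<lambda>\<omega>. (I1 \<omega>, I2 \<omega>)) ((borel \<Otimes>\<^sub>M borel) \<Otimes>\<^sub>M (borel \<Otimes>\<^sub>M borel))
          (\<lambda>\<omega>. ((U01 \<omega>, U11 \<omega>), (U02 \<omega>, U12 \<omega>)))"
    by (simp add: g_def o_def)
  have Z: "indep_var (borel \<Otimes>\<^sub>M borel) (\<lambda>\<omega>. (U01 \<omega>, U11 \<omega>)) (borel \<Otimes>\<^sub>M borel) (\<lambda>\<omega>. (U02 \<omega>, U12 \<omega>))"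
    using indep_var_pairs_of_indep_vars[OF indep_uniforms, of 0 2 1 3] by simp
  have total: "(\<Sum>k\<in>{0, 1}\<times>{0, 1}. prob {\<omega>\<in>space M. (I1 \<omega>, I2 \<omega>) = k}) = 1"
    using bernoulli by (simp add: case_prod_beta' prod_eq_iff)
  show ?thesis
    using prob_mixture_indep_rv[OF J Z _ total A B] by (simp add: case_prod_beta' prod_eq_iff)
qed

lemma measurable_variables [measurable]:
  "I1 \<in> measurable M (count_space UNIV)" "I2 \<in> measurable M (count_space UNIV)"
  "U01 \<in> borel_measurable M" "U02 \<in> borel_measurable M"
  "U11 \<in> borel_measurable M" "U12 \<in> borel_measurable M"
proof -
  have "(\<lambda>\<omega>. (I1 \<omega>, I2 \<omega>)) \<in> measurable M (count_space UNIV \<Otimes>\<^sub>M count_space UNIV)"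
    using indep_bernoulli by (simp add: indep_rv_def pair_measure_countable)
  then show "I1 \<in> measurable M (count_space UNIV)" "I2 \<in> measurable M (count_space UNIV)"
    by (auto dest: measurable_Pair1' measurable_Pair2')
  show "U01 \<in> borel_measurable M" "U02 \<in> borel_measurable M"
    "U11 \<in> borel_measurable M" "U12 \<in> borel_measurable M"
    using distributed_measurable[OF U01] distributed_measurable[OF U02]
      distributed_measurable[OF U11] distributed_measurable[OF U12] by auto
qed

lemma prob_U01_U11_le:
  assumes "i \<le> 1" "0 \<le> x" "x \<le> 1"
  shows "prob {\<omega>\<in>space M. U01 \<omega> powr (1 - p1) * U11 \<omega> ^ i \<le> x} = conditional_cdf p1 i x"
proof -
  have "indep_var borel U01 borel U11"
    using indep_var_of_indep_vars[OF indep_uniforms, of 0 2] by simp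
  then show ?thesis
    using prob_uniform_powr_mult_pow_le[OF U01 U11] p assms by simp
qed

lemma prob_U02_U12_le:
  assumes "j \<le> 1" "0 \<le> y" "y \<le> 1"
  shows "prob {\<omega>\<in>space M. U02 \<omega> powr (1 - p2) * U12 \<omega> ^ j \<le> y} = conditional_cdf p2 j y"
proof -
  have "indep_var borel U02 borel U12"
    using indep_var_of_indep_vars[OF indep_uniforms, of 1 3] by simp
  then show ?thesis
    using prob_uniform_powr_mult_pow_le[OF U02 U12] p assms by simp
qed

lemma joint_cdf_U1_U2:
  assumes "0 \<le> x" "x \<le> 1" "0 \<le> y" "y \<le> 1"
  shows "prob {\<omega>\<in>space M. U01 \<omega> powr (1 - p1) * U11 \<omega> ^ I1 \<omega> \<le> x \<and> U02 \<omega> powr (1 - p2) * U12 \<omega> ^ I2 \<omega> \<le> y} =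
    (\<Sum>(i, j)\<in>{0, 1}\<times>{0, 1}. prob {\<omega>\<in>space M. I1 \<omega> = i \<and> I2 \<omega> = j}
       * conditional_cdf p1 i x * conditional_cdf p2 j y)"
proof -
  let ?A = "\<lambda>(i, j). {z. fst z powr (1 - p1) * snd z ^ i \<le> x}"
  let ?B = "\<lambda>(i, j). {z. fst z powr (1 - p2) * snd z ^ j \<le> y}"
  have "prob {\<omega>\<in>space M. U01 \<omega> powr (1 - p1) * U11 \<omega> ^ I1 \<omega> \<le> x \<and> U02 \<omega> powr (1 - p2) * U12 \<omega> ^ I2 \<omega> \<le> y} =
      prob {\<omega>\<in>space M. (U01 \<omega>, U11 \<omega>) \<in> ?A (I1 \<omega>, I2 \<omega>) \<and> (U02 \<omega>, U12 \<omega>) \<in> ?B (I1 \<omega>, I2 \<omega>)}"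
    by simp
  also have "\<dots> = (\<Sum>(i, j)\<in>{0, 1}\<times>{0, 1}. prob {\<omega>\<in>space M. I1 \<omega> = i \<and> I2 \<omega> = j}
       * prob {\<omega>\<in>space M. (U01 \<omega>, U11 \<omega>) \<in> ?A (i, j)} * prob {\<omega>\<in>space M. (U02 \<omega>, U12 \<omega>) \<in> ?B (i, j)})"
    by (rule prob_mixture) (simp_all add: case_prod_beta')
  also have "\<dots> = (\<Sum>(i, j)\<in>{0, 1}\<times>{0, 1}. prob {\<omega>\<in>space M. I1 \<omega> = i \<and> I2 \<omega> = j}
       * conditional_cdf p1 i x * conditional_cdf p2 j y)"
    using prob_U01_U11_le[of 0 x] prob_U01_U11_le[of 1 x] prob_U02_U12_le[of 0 y] prob_U02_U12_le[of 1 y] assms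
    by (simp add: sum.cartesian_product[symmetric])
  finally show ?thesis .
qed

lemma cdf_U1:
  assumes "0 \<le> x" "x \<le> 1"
  shows "prob {\<omega>\<in>space M. U01 \<omega> powr (1 - p1) * U11 \<omega> ^ I1 \<omega> \<le> x} =
    (\<Sum>(i, j)\<in>{0, 1}\<times>{0, 1}. prob {\<omega>\<in>space M. I1 \<omega> = i \<and> I2 \<omega> = j} * conditional_cdf p1 i x)"
proof -
  let ?A = "\<lambda>(i, j). {z. fst z powr (1 - p1) * snd z ^ i \<le> x}"
  have "prob {\<omega>\<in>space M. U01 \<omega> powr (1 - p1) * U11 \<omega> ^ I1 \<omega> \<le> x} =
      prob {\<omega>\<in>space M. (U01 \<omega>, U11 \<omega>) \<in> ?A (I1 \<omega>, I2 \<omega>) \<and> (U02 \<omega>, U12 \<omega>) \<in> UNIV}"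
    by simp
  also have "\<dots> = (\<Sum>(i, j)\<in>{0, 1}\<times>{0, 1}. prob {\<omega>\<in>space M. I1 \<omega> = i \<and> I2 \<omega> = j}
       * prob {\<omega>\<in>space M. (U01 \<omega>, U11 \<omega>) \<in> ?A (i, j)} * prob {\<omega>\<in>space M. (U02 \<omega>, U12 \<omega>) \<in> UNIV})"
    using sets.top[of "borel \<Otimes>\<^sub>M borel :: (real \<times> real) measure"]
    by (intro prob_mixture[where B="\<lambda>_. UNIV"]) (simp_all add: case_prod_beta' space_pair_measure)
  also have "\<dots> = (\<Sum>(i, j)\<in>{0, 1}\<times>{0, 1}. prob {\<omega>\<in>space M. I1 \<omega> = i \<and> I2 \<omega> = j} * conditional_cdf p1 i x)"
    using prob_U01_U11_le[of 0 x] prob_U01_U11_le[of 1 x] assms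
    by (simp add: sum.cartesian_product[symmetric] prob_space)
  finally show ?thesis .
qed

lemma cdf_U2:
  assumes "0 \<le> y" "y \<le> 1"
  shows "prob {\<omega>\<in>space M. U02 \<omega> powr (1 - p2) * U12 \<omega> ^ I2 \<omega> \<le> y} =
    (\<Sum>(i, j)\<in>{0, 1}\<times>{0, 1}. prob {\<omega>\<in>space M. I1 \<omega> = i \<and> I2 \<omega> = j} * conditional_cdf p2 j y)"
proof -
  let ?B = "\<lambda>(i, j). {z. fst z powr (1 - p2) * snd z ^ j \<le> y}"
  have "prob {\<omega>\<in>space M. U02 \<omega> powr (1 - p2) * U12 \<omega> ^ I2 \<omega> \<le> y} =
      prob {\<omega>\<in>space M. (U01 \<omega>, U11 \<omega>) \<in> UNIV \<and> (U02 \<omega>, U12 \<omega>) \<in> ?B (I1 \<omega>, I2 \<omega>)}"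
    by simp
  also have "\<dots> = (\<Sum>(i, j)\<in>{0, 1}\<times>{0, 1}. prob {\<omega>\<in>space M. I1 \<omega> = i \<and> I2 \<omega> = j}
       * prob {\<omega>\<in>space M. (U01 \<omega>, U11 \<omega>) \<in> UNIV} * prob {\<omega>\<in>space M. (U02 \<omega>, U12 \<omega>) \<in> ?B (i, j)})"
    using sets.top[of "borel \<Otimes>\<^sub>M borel :: (real \<times> real) measure"]
    by (intro prob_mixture[where A="\<lambda>_. UNIV"]) (simp_all add: case_prod_beta' space_pair_measure)
  also have "\<dots> = (\<Sum>(i, j)\<in>{0, 1}\<times>{0, 1}. prob {\<omega>\<in>space M. I1 \<omega> = i \<and> I2 \<omega> = j} * conditional_cdf p2 j y)"
    using prob_U02_U12_le[of 0 y] prob_U02_U12_le[of 1 y] assms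
    by (simp add: sum.cartesian_product[symmetric] prob_space)
  finally show ?thesis .
qed

end

theorem proposition4p1:
  fixes M :: "'a measure"
    and p1 p2 \<theta> :: real
    and I1 I2 :: "'a \<Rightarrow> nat"
    and U01 U02 U11 U12 :: "'a \<Rightarrow> real"
  assumes "prob_space M"
    and "0 < p1" "p1 < 1" "0 < p2" "p2 < 1"
    and "- min 1 ((1 - p1) * (1 - p2) / (p1 * p2)) \<le> \<theta>"
    and "\<theta> \<le> min ((1 - p1) / p1) ((1 - p2) / p2)"
    and "measure M {\<omega>\<in>space M. I1 \<omega> = 0 \<and> I2 \<omega> = 0} = (1 - p1) * (1 - p2) + p1 * p2 * \<theta>"
    and "measure M {\<omega>\<in>space M. I1 \<omega> = 0 \<and> I2 \<omega> = 1} = (1 - p1) * p2 - p1 * p2 * \<theta>"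
    and "measure M {\<omega>\<in>space M. I1 \<omega> = 1 \<and> I2 \<omega> = 0} = p1 * (1 - p2) - p1 * p2 * \<theta>"
    and "measure M {\<omega>\<in>space M. I1 \<omega> = 1 \<and> I2 \<omega> = 1} = p1 * p2 + p1 * p2 * \<theta>"
    and "distributed M lborel U01 (indicator {0..1})"
    and "distributed M lborel U02 (indicator {0..1})"
    and "distributed M lborel U11 (indicator {0..1})"
    and "distributed M lborel U12 (indicator {0..1})"
    and "prob_space.indep_vars M (\<lambda>_. borel) (\<lambda>i. [U01, U02, U11, U12] ! i) {..<4}"
    and "indep_rv M (count_space UNIV) (\<lambda>\<omega>. (I1 \<omega>, I2 \<omega>))
           borel (\<lambda>\<omega>. (U01 \<omega>, U02 \<omega>, U11 \<omega>, U12 \<omega>))"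
  shows "copula_of M
           (\<lambda>\<omega>. U01 \<omega> powr (1 - p1) * U11 \<omega> ^ I1 \<omega>)
           (\<lambda>\<omega>. U02 \<omega> powr (1 - p2) * U12 \<omega> ^ I2 \<omega>)
           (\<lambda>u v. u * v * (1 + \<theta> * (1 - u powr (p1 / (1 - p1))) * (1 - v powr (p2 / (1 - p2)))))"
proof -
  note cells = assms(8-11)
  have "bernoulli_uniform_mixture M p1 p2 I1 I2 U01 U02 U11 U12"
    unfolding bernoulli_uniform_mixture_def bernoulli_uniform_mixture_axioms_def
    using assms by (simp add: sum.cartesian_product[symmetric] algebra_simps)
  then interpret bernoulli_uniform_mixture M p1 p2 I1 I2 U01 U02 U11 U12 .
  show ?thesis
  proof (rule copula_of_uniform_margins)
    fix x y :: real assume x: "0 \<le> x" "x \<le> 1" and y: "0 \<le> y" "y \<le> 1"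
    show "prob {\<omega>\<in>space M. U01 \<omega> powr (1 - p1) * U11 \<omega> ^ I1 \<omega> \<le> x} = x"
      using cdf_U1[OF x] conditional_cdf_average[OF x(1) p(1,2)]
      by (simp add: sum.cartesian_product[symmetric] cells[simplified] algebra_simps)
    show "prob {\<omega>\<in>space M. U02 \<omega> powr (1 - p2) * U12 \<omega> ^ I2 \<omega> \<le> y} = y"
      using cdf_U2[OF y] conditional_cdf_average[OF y(1) p(3,4)]
      by (simp add: sum.cartesian_product[symmetric] cells[simplified] algebra_simps)
    show "prob {\<omega>\<in>space M. U01 \<omega> powr (1 - p1) * U11 \<omega> ^ I1 \<omega> \<le> x \<and> U02 \<omega> powr (1 - p2) * U12 \<omega> ^ I2 \<omega> \<le> y} =
        x * y * (1 + \<theta> * (1 - x powr (p1 / (1 - p1))) * (1 - y powr (p2 / (1 - p2))))"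
      using joint_cdf_U1_U2[OF x y] conditional_cdf_bivariate_mixture[OF x(1) y(1) p, where \<theta> = \<theta>]
      by (simp add: sum.cartesian_product[symmetric] cells[simplified] algebra_simps)
  qed measurable
qed

end
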